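(* Let $\sigma\in\mathcal S_d$. Then $\sigma\in\mathcal B$ if and only if there exists a probability vector $\mathbf p$ on $\mathcal I$ (entries $\ge0$ summing to $1$) such that $\chi_{\sigma_1}(\mathbf p)<\chi_{\sigma_2}(\mathbf p)<\dots<\chi_{\sigma_d}(\mathbf p)$.
   Context: Setting: $\mathcal I=\{1,\dots,N\}$, $f_i(x)=A_ix+t_i$ on $\mathbb R^d$ with $A_i=\mathrm{diag}(\lambda_i^{(1)},\dots,\lambda_i^{(d)})$, all $\lambda_i^{(n)}\in(0,1)$, $f_i([0,1]^d)\subset[0,1]^d$, no two maps agree on $[0,1]^d$, and for all $m\ne n$ there is $i$ with $\lambda_i^{(n)}\ne\lambda_i^{(m)}$. $\Sigma=\mathcal I^{\mathbb N}$. For $\mathbf i\in\Sigma$, $r>0$, $1\le n\le d$, $L_{\mathbf i}(r,n)$ is the unique integer with $\prod_{\ell=1}^{L_{\mathbf i}(r,n)}\lambda_{i_\ell}^{(n)}\le r<\prod_{\ell=1}^{L_{\mathbf i}(r,n)-1}\lambda_{i_\ell}^{(n)}$. For a permutation $\sigma=(\sigma_1,\dots,\sigma_d)$ of $\{1,\dots,d\}$, $\mathbf i$ determines a strictly $\sigma$-ordered cylinder at scale $r$ if, with $L=L_{\mathbf i}(r,\sigma_d)$, $\prod_{\ell=1}^L\lambda_{i_\ell}^{(\sigma_d)}<\prod_{\ell=1}^L\lambda_{i_\ell}^{(\sigma_{d-1})}<\dots<\prod_{\ell=1}^L\lambda_{i_\ell}^{(\sigma_1)}$. $\mathcal B$ is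 the set of $\sigma$ for which some $\mathbf i\in\Sigma$ and $r>0$ determine a strictly $\sigma$-ordered cylinder at scale $r$. Lyapunov exponent: $\chi_x(\mathbf p)=-\sum_{i\in\mathcal I}p(i)\log\lambda_i^{(x)}$ for a coordinate $x$. *)

theory Defs
  imports "HOL-Analysis.Analysis"
begin

text \<open>Maps are indexed by \<open>i \<in> {1..N}\<close>, coordinates by \<open>n \<in> {1..d}\<close>.
  \<open>lam i n\<close> is the diagonal entry \<open>\<lambda>_i^{(n)}\<close>, \<open>t i n\<close> the n-th translation coordinate.
  Points of R^d are functions \<open>nat \<Rightarrow> real\<close> restricted to coordinates 1..d.\<close>

definition unit_cube :: "nat \<Rightarrow> (nat \<Rightarrow> real) set" where
  "unit_cube d = {x. \<forall>n\<in>{1..d}. 0 \<le> x n \<and> x n \<le> 1}"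

definition affine_map :: "nat \<Rightarrow> (nat \<Rightarrow> nat \<Rightarrow> real) \<Rightarrow> (nat \<Rightarrow> nat \<Rightarrow> real) \<Rightarrow> nat
    \<Rightarrow> (nat \<Rightarrow> real) \<Rightarrow> (nat \<Rightarrow> real)" where
  "affine_map d lam t i x = (\<lambda>n. if n \<in> {1..d} then lam i n * x n + t i n else 0)"

definition diag_system :: "nat \<Rightarrow> nat \<Rightarrow> (nat \<Rightarrow> nat \<Rightarrow> real) \<Rightarrow> (nat \<Rightarrow> nat \<Rightarrow> real) \<Rightarrow> bool" where
  "diag_system N d lam t \<longleftrightarrow>
     (\<forall>i\<in>{1..N}. \<forall>n\<in>{1..d}. 0 < lam i n \<and> lam i n < 1) \<and>
     (\<forall>i\<in>{1..N}. affine_map d lam t i ` unit_cube d \<subseteq> unit_cube d) \<and>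
     (\<forall>i\<in>{1..N}. \<forall>j\<in>{1..N}. i \<noteq> j \<longrightarrow>
        (\<exists>x\<in>unit_cube d. affine_map d lam t i x \<noteq> affine_map d lam t j x)) \<and>
     (\<forall>m\<in>{1..d}. \<forall>n\<in>{1..d}. m \<noteq> n \<longrightarrow> (\<exists>i\<in>{1..N}. lam i n \<noteq> lam i m))"

text \<open>Symbolic space: sequences \<open>i_1 i_2 \<dots>\<close> with entries in {1..N}; we store \<open>i_{\<ell>+1}\<close>
  as \<open>w \<ell>\<close> (0-based).\<close>

definition Sigma_N :: "nat \<Rightarrow> (nat \<Rightarrow> nat) set" where
  "Sigma_N N = {w. \<forall>l. w l \<in> {1..N}}"

definition cprod :: "(nat \<Rightarrow> nat \<Rightarrow> real) \<Rightarrow> (nat \<Rightarrow> nat) \<Rightarrow> nat \<Rightarrow> nat \<Rightarrow> real" where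
  "cprod lam w L n = (\<Prod>l<L. lam (w l) n)"

definition Lscale :: "(nat \<Rightarrow> nat \<Rightarrow> real) \<Rightarrow> (nat \<Rightarrow> nat) \<Rightarrow> real \<Rightarrow> nat \<Rightarrow> nat" where
  "Lscale lam w r n = (THE L. 1 \<le> L \<and> cprod lam w L n \<le> r \<and> r < cprod lam w (L - 1) n)"

definition strictly_ordered_cyl ::
  "nat \<Rightarrow> (nat \<Rightarrow> nat \<Rightarrow> real) \<Rightarrow> (nat \<Rightarrow> nat) \<Rightarrow> (nat \<Rightarrow> nat) \<Rightarrow> real \<Rightarrow> bool" where
  "strictly_ordered_cyl d lam \<sigma> w r \<longleftrightarrow>
     (let L = Lscale lam w r (\<sigma> d) in
      \<forall>k\<in>{1..<d}. cprod lam w L (\<sigma> (k+1)) < cprod lam w L (\<sigma> k))"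

definition Bset :: "nat \<Rightarrow> nat \<Rightarrow> (nat \<Rightarrow> nat \<Rightarrow> real) \<Rightarrow> (nat \<Rightarrow> nat) set" where
  "Bset N d lam = {\<sigma>. \<sigma> permutes {1..d} \<and>
      (\<exists>w\<in>Sigma_N N. \<exists>r. 0 < r \<and> r < 1 \<and> strictly_ordered_cyl d lam \<sigma> w r)}"

definition lyap :: "nat \<Rightarrow> (nat \<Rightarrow> nat \<Rightarrow> real) \<Rightarrow> nat \<Rightarrow> (nat \<Rightarrow> real) \<Rightarrow> real" where
  "lyap N lam x p = - (\<Sum>i\<in>{1..N}. p i * ln (lam i x))"

definition prob_vector :: "nat \<Rightarrow> (nat \<Rightarrow> real) \<Rightarrow> bool" where
  "prob_vector N p \<longleftrightarrow> (\<forall>i\<in>{1..N}. 0 \<le> p i) \<and> (\<Sum>i\<in>{1..N}. p i) = 1"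

end

theory Submission
  imports Defs
begin

text \<open>A prefix of length \<open>L\<close> of a word uses each letter \<open>i\<close> some number \<open>c i\<close> of times, and
  \<open>-ln\<close> of its \<open>n\<close>-th product is the Lyapunov exponent \<open>\<chi>_n\<close> of the weight vector \<open>c\<close>.
  So a strictly \<open>\<sigma>\<close>-ordered prefix gives the probability vector \<open>c / L\<close> with
  \<open>\<chi>_{\<sigma>_1} < \<dots> < \<chi>_{\<sigma>_d}\<close>. Conversely, for a probability vector \<open>p\<close> and \<open>M\<close> large, the
  integer weights \<open>\<lfloor>M p\<rfloor>\<close> change each \<open>M \<chi>_n(p)\<close> by a bounded amount, so the strict
  inequalities survive and are realized by a word containing letter \<open>i\<close> exactly
  \<open>\<lfloor>M p_i\<rfloor>\<close> times; the ordered prefix determines a strictly ordered cylinder at the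
  scale \<open>r\<close> equal to its \<open>\<sigma>_d\<close>-th product.\<close>

definition ordered_prefix ::
  "nat \<Rightarrow> (nat \<Rightarrow> nat \<Rightarrow> real) \<Rightarrow> (nat \<Rightarrow> nat) \<Rightarrow> (nat \<Rightarrow> nat) \<Rightarrow> nat \<Rightarrow> bool" where
  "ordered_prefix d lam \<sigma> w L \<longleftrightarrow> (\<forall>k\<in>{1..<d}. cprod lam w L (\<sigma> (k+1)) < cprod lam w L (\<sigma> k))"

definition letter_count :: "(nat \<Rightarrow> nat) \<Rightarrow> nat \<Rightarrow> nat \<Rightarrow> nat" where
  "letter_count w L i = card {l. l < L \<and> w l = i}"

definition lyap_ordered :: "nat \<Rightarrow> nat \<Rightarrow> (nat \<Rightarrow> nat \<Rightarrow> real) \<Rightarrow> (nat \<Rightarrow> nat) \<Rightarrow> (nat \<Rightarrow> real) \<Rightarrow> bool" where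
  "lyap_ordered N d lam \<sigma> p \<longleftrightarrow> (\<forall>k\<in>{1..<d}. lyap N lam (\<sigma> k) p < lyap N lam (\<sigma> (k+1)) p)"

lemma Sigma_N_letter: "w \<in> Sigma_N N \<Longrightarrow> w l \<in> {1..N}"
  by (simp add: Sigma_N_def)

lemma cprod_0 [simp]: "cprod lam w 0 n = 1"
  by (simp add: cprod_def)

lemma cprod_Suc: "cprod lam w (Suc L) n = cprod lam w L n * lam (w L) n"
  by (simp add: cprod_def)

lemma cprod_pos:
  assumes "w \<in> Sigma_N N" "\<forall>i\<in>{1..N}. 0 < lam i n"
  shows "0 < cprod lam w L n"
  unfolding cprod_def using assms by (auto simp: Sigma_N_def intro!: prod_pos)

lemma cprod_less_iff:
  assumes "w \<in> Sigma_N N" "\<forall>i\<in>{1..N}. 0 < lam i n \<and> lam i n < 1"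
  shows "cprod lam w L' n < cprod lam w L n \<longleftrightarrow> L < L'"
proof -
  have "- cprod lam w m n < - cprod lam w (Suc m) n" for m
    using cprod_pos[OF assms(1), of lam n m] assms Sigma_N_letter[OF assms(1), of m]
    by (simp add: cprod_Suc)
  then show ?thesis
    using lift_Suc_mono_less_iff[of "\<lambda>m. - cprod lam w m n"] by simp
qed

lemma Lscale_cprod:
  assumes "w \<in> Sigma_N N" "\<forall>i\<in>{1..N}. 0 < lam i n \<and> lam i n < 1" "1 \<le> L"
  shows "Lscale lam w (cprod lam w L n) n = L"
  unfolding Lscale_def
proof (rule the_equality)
  show "1 \<le> L \<and> cprod lam w L n \<le> cprod lam w L n \<and> cprod lam w L n < cprod lam w (L - 1) n"
    using assms cprod_less_iff[of w N lam n, OF assms(1,2)] by simp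
next
  fix L' assume L': "1 \<le> L' \<and> cprod lam w L' n \<le> cprod lam w L n \<and> cprod lam w L n < cprod lam w (L' - 1) n"
  then have "\<not> L' < L" "L' - 1 < L"
    using cprod_less_iff[of w N lam n, OF assms(1,2)] by (auto simp: not_less[symmetric])
  then show "L' = L" using L' by linarith
qed

lemma cprod_eq_prod_letter_count:
  assumes "w \<in> Sigma_N N"
  shows "cprod lam w L n = (\<Prod>i\<in>{1..N}. lam i n ^ letter_count w L i)"
proof -
  have "cprod lam w L n = (\<Prod>i\<in>{1..N}. \<Prod>l\<in>{l. l \<in> {..<L} \<and> w l = i}. lam (w l) n)"
    unfolding cprod_def using Sigma_N_letter[OF assms] by (intro prod.group[symmetric]) auto
  also have "\<dots> = (\<Prod>i\<in>{1..N}. lam i n ^ letter_count w L i)"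
    by (intro prod.cong refl) (simp add: letter_count_def)
  finally show ?thesis .
qed

lemma sum_letter_count:
  assumes "w \<in> Sigma_N N"
  shows "(\<Sum>i\<in>{1..N}. letter_count w L i) = L"
proof -
  have "(\<Sum>i\<in>{1..N}. \<Sum>l\<in>{l. l \<in> {..<L} \<and> w l = i}. 1) = (\<Sum>l\<in>{..<L}. 1::nat)"
    using Sigma_N_letter[OF assms] by (intro sum.group) auto
  then show ?thesis by (simp add: letter_count_def)
qed

lemma exists_word_letter_count:
  fixes a :: "nat \<Rightarrow> nat"
  assumes "1 \<le> N"
  shows "\<exists>w\<in>Sigma_N N. \<exists>L. \<forall>i\<in>{1..N}. letter_count w L i = a i"
proof -
  define xs where "xs = concat (map (\<lambda>j. replicate (a j) j) [1..<N+1])"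
  define w where "w l = (if l < length xs then xs ! l else 1)" for l
  have "set xs \<subseteq> {1..N}" unfolding xs_def by auto
  then have "w \<in> Sigma_N N" using assms by (auto simp: Sigma_N_def w_def dest: nth_mem)
  moreover have "letter_count w (length xs) i = a i" if "i \<in> {1..N}" for i
  proof -
    have "letter_count w (length xs) i = length (filter (\<lambda>y. y = i) xs)"
      by (simp add: letter_count_def length_filter_conv_card w_def conj_commute cong: conj_cong)
    also have "\<dots> = a i"
      using that unfolding xs_def
      by (simp add: filter_concat length_concat comp_def filter_replicate if_distrib[of length]
          interv_sum_list_conv_sum_set_nat atLeastLessThanSuc_atLeastAtMost del: upt_Suc cong: if_cong)
    finally show ?thesis .
  qed
  ultimately show ?thesis by blast
qed

lemma lyap_divide: "lyap N lam x (\<lambda>i. p i / c) = lyap N lam x p / c"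
  by (simp add: lyap_def sum_divide_distrib)

lemma lyap_ordered_divide:
  "0 < c \<Longrightarrow> lyap_ordered N d lam \<sigma> (\<lambda>i. p i / c) \<longleftrightarrow> lyap_ordered N d lam \<sigma> p"
  by (simp add: lyap_ordered_def lyap_divide divide_less_cancel)

lemma lyap_letter_count:
  assumes "w \<in> Sigma_N N" "\<forall>i\<in>{1..N}. 0 < lam i n"
  shows "lyap N lam n (\<lambda>i. real (letter_count w L i)) = - ln (cprod lam w L n)"
proof -
  have "ln (cprod lam w L n) = (\<Sum>i\<in>{1..N}. ln (lam i n ^ letter_count w L i))"
    unfolding cprod_eq_prod_letter_count[OF assms(1)] using assms(2) by (intro ln_prod) force+
  also have "\<dots> = (\<Sum>i\<in>{1..N}. real (letter_count w L i) * ln (lam i n))"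
    using assms(2) by (simp add: ln_realpow)
  finally show ?thesis by (simp add: lyap_def)
qed

lemma lyap_ordered_cong:
  "(\<And>i. i \<in> {1..N} \<Longrightarrow> p i = q i) \<Longrightarrow> lyap_ordered N d lam \<sigma> p \<longleftrightarrow> lyap_ordered N d lam \<sigma> q"
  by (simp add: lyap_ordered_def lyap_def)

lemma lyap_floor_approx:
  fixes M :: real
  assumes "0 \<le> M" "\<forall>i\<in>{1..N}. 0 \<le> p i"
  shows "\<bar>lyap N lam x (\<lambda>i. real (nat \<lfloor>M * p i\<rfloor>)) - M * lyap N lam x p\<bar>
           \<le> (\<Sum>i\<in>{1..N}. \<bar>ln (lam i x)\<bar>)"
proof -
  define err where "err i = real (nat \<lfloor>M * p i\<rfloor>) - M * p i" for i
  have err_bound: "\<bar>err i\<bar> \<le> 1" if "i \<in> {1..N}" for i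
  proof -
    have "0 \<le> M * p i" using assms that by simp
    then show ?thesis unfolding err_def by linarith
  qed
  have "lyap N lam x (\<lambda>i. real (nat \<lfloor>M * p i\<rfloor>)) - M * lyap N lam x p
      = - (\<Sum>i\<in>{1..N}. err i * ln (lam i x))"
    by (simp add: lyap_def err_def sum_distrib_left left_diff_distrib sum_subtractf mult.assoc)
  also have "\<bar>\<dots>\<bar> \<le> (\<Sum>i\<in>{1..N}. \<bar>err i\<bar> * \<bar>ln (lam i x)\<bar>)"
    using sum_abs[of "\<lambda>i. err i * ln (lam i x)" "{1..N}"] by (simp add: abs_mult)
  also have "\<dots> \<le> (\<Sum>i\<in>{1..N}. \<bar>ln (lam i x)\<bar>)"
    using err_bound by (intro sum_mono) (simp add: mult_left_le_one_le)
  finally show ?thesis .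
qed

lemma lyap_ordered_nat_weights:
  assumes "\<forall>i\<in>{1..N}. 0 \<le> p i" "lyap_ordered N d lam \<sigma> p"
  shows "\<exists>a::nat \<Rightarrow> nat. lyap_ordered N d lam \<sigma> (\<lambda>i. real (a i))"
proof -
  define C where "C x = (\<Sum>i\<in>{1..N}. \<bar>ln (lam i x)\<bar>)" for x
  define gap where "gap k = lyap N lam (\<sigma> (k+1)) p - lyap N lam (\<sigma> k) p" for k
  have "\<forall>\<^sub>F M in at_top. \<forall>k\<in>{1..<d}. C (\<sigma> k) + C (\<sigma> (k+1)) < M * gap k"
  proof (intro eventually_ball_finite ballI)
    fix k assume "k \<in> {1..<d}"
    then have "0 < gap k" using assms(2) by (simp add: gap_def lyap_ordered_def)
    then show "\<forall>\<^sub>F M in at_top. C (\<sigma> k) + C (\<sigma> (k+1)) < M * gap k"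
      by (intro eventually_mono[OF eventually_gt_at_top[of "(C (\<sigma> k) + C (\<sigma> (k+1))) / gap k"]])
        (simp add: pos_divide_less_eq)
  qed simp
  moreover have "\<forall>\<^sub>F M in at_top. (0::real) \<le> M" by simp
  ultimately have
    "\<forall>\<^sub>F M in at_top. 0 \<le> M \<and> (\<forall>k\<in>{1..<d}. C (\<sigma> k) + C (\<sigma> (k+1)) < M * gap k)"
    by eventually_elim blast
  then obtain M where "0 \<le> M" and M: "\<forall>k\<in>{1..<d}. C (\<sigma> k) + C (\<sigma> (k+1)) < M * gap k"
    unfolding eventually_at_top_linorder by blast
  have separated: "u < v" if "\<bar>u - x\<bar> \<le> c" "\<bar>v - y\<bar> \<le> c'" "c + c' < y - x" for u v x y c c' :: real
    using that by linarith
  have approx: "\<bar>lyap N lam x (\<lambda>i. real (nat \<lfloor>M * p i\<rfloor>)) - M * lyap N lam x p\<bar> \<le> C x" for x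
    unfolding C_def by (rule lyap_floor_approx[OF \<open>0 \<le> M\<close> assms(1)])
  have "lyap N lam (\<sigma> k) (\<lambda>i. real (nat \<lfloor>M * p i\<rfloor>))
      < lyap N lam (\<sigma> (k+1)) (\<lambda>i. real (nat \<lfloor>M * p i\<rfloor>))" if "k \<in> {1..<d}" for k
    by (rule separated[OF approx approx]) (use M that in \<open>simp add: gap_def right_diff_distrib\<close>)
  then show ?thesis unfolding lyap_ordered_def by (intro exI[of _ "\<lambda>i. nat \<lfloor>M * p i\<rfloor>"]) blast
qed

lemma ordered_prefix_pos_length:
  assumes "ordered_prefix d lam \<sigma> w L"
  shows "\<exists>L'\<ge>1. ordered_prefix d lam \<sigma> w L'"
proof (cases "L = 0")
  case True
  then have "d \<le> 1" using assms by (fastforce simp: ordered_prefix_def)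
  then show ?thesis by (auto simp: ordered_prefix_def)
next
  case False
  then show ?thesis using assms by (intro exI[of _ L]) simp
qed

lemma strictly_ordered_cyl_iff:
  "strictly_ordered_cyl d lam \<sigma> w r \<longleftrightarrow> ordered_prefix d lam \<sigma> w (Lscale lam w r (\<sigma> d))"
  by (simp add: strictly_ordered_cyl_def ordered_prefix_def Let_def)

lemma Bset_iff_ordered_prefix:
  assumes lam: "\<forall>n\<in>{1..d}. \<forall>i\<in>{1..N}. 0 < lam i n \<and> lam i n < 1"
    and \<sigma>: "\<sigma> permutes {1..d}"
  shows "\<sigma> \<in> Bset N d lam \<longleftrightarrow> (\<exists>w\<in>Sigma_N N. \<exists>L. ordered_prefix d lam \<sigma> w L)"
proof
  assume "\<sigma> \<in> Bset N d lam"
  then show "\<exists>w\<in>Sigma_N N. \<exists>L. ordered_prefix d lam \<sigma> w L"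
    by (auto simp: Bset_def strictly_ordered_cyl_iff)
next
  assume "\<exists>w\<in>Sigma_N N. \<exists>L. ordered_prefix d lam \<sigma> w L"
  then obtain w L where w: "w \<in> Sigma_N N" and L: "1 \<le> L" "ordered_prefix d lam \<sigma> w L"
    using ordered_prefix_pos_length by blast
  have "\<exists>r. 0 < r \<and> r < 1 \<and> strictly_ordered_cyl d lam \<sigma> w r"
  proof (cases "d = 0")
    case True
    \<comment> \<open>the cylinder condition is vacuous, and \<open>\<sigma> 0\<close> is not a coordinate\<close>
    then show ?thesis by (intro exI[of _ "1/2"]) (simp add: strictly_ordered_cyl_def)
  next
    case False
    then have "\<sigma> d \<in> {1..d}" using permutes_in_image[OF \<sigma>] by simp
    then have lam_d: "\<forall>i\<in>{1..N}. 0 < lam i (\<sigma> d) \<and> lam i (\<sigma> d) < 1" using lam by blast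
    show ?thesis
    proof (intro exI conjI)
      show "0 < cprod lam w L (\<sigma> d)" using cprod_pos w lam_d by blast
      show "cprod lam w L (\<sigma> d) < 1"
        using cprod_less_iff[of w N lam "\<sigma> d" L 0, OF w lam_d] L by simp
      show "strictly_ordered_cyl d lam \<sigma> w (cprod lam w L (\<sigma> d))"
        using Lscale_cprod[of w N lam "\<sigma> d", OF w lam_d L(1)] L(2) by (simp add: strictly_ordered_cyl_iff)
    qed
  qed
  then show "\<sigma> \<in> Bset N d lam" using \<sigma> w by (auto simp: Bset_def)
qed

lemma ordered_prefix_iff_lyap_ordered_letter_count:
  assumes w: "w \<in> Sigma_N N" and \<sigma>: "\<sigma> permutes {1..d}"
    and lam: "\<forall>n\<in>{1..d}. \<forall>i\<in>{1..N}. 0 < lam i n"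
  shows "ordered_prefix d lam \<sigma> w L \<longleftrightarrow> lyap_ordered N d lam \<sigma> (\<lambda>i. real (letter_count w L i))"
proof -
  have "lyap N lam (\<sigma> k) (\<lambda>i. real (letter_count w L i))
        < lyap N lam (\<sigma> (k+1)) (\<lambda>i. real (letter_count w L i))
      \<longleftrightarrow> cprod lam w L (\<sigma> (k+1)) < cprod lam w L (\<sigma> k)" if "k \<in> {1..<d}" for k
  proof -
    have "\<sigma> k \<in> {1..d}" "\<sigma> (k+1) \<in> {1..d}" using that permutes_in_image[OF \<sigma>] by auto
    then have "\<forall>i\<in>{1..N}. 0 < lam i (\<sigma> k)" "\<forall>i\<in>{1..N}. 0 < lam i (\<sigma> (k+1))" using lam by auto
    then show ?thesis using lyap_letter_count[OF w] cprod_pos[OF w] by simp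
  qed
  then show ?thesis unfolding ordered_prefix_def lyap_ordered_def by auto
qed

lemma prob_vector_letter_frequency:
  assumes "w \<in> Sigma_N N" "1 \<le> L"
  shows "prob_vector N (\<lambda>i. real (letter_count w L i) / real L)"
  using sum_letter_count[OF assms(1), of L] assms(2)
  by (simp add: prob_vector_def flip: sum_divide_distrib of_nat_sum)

lemma ordered_prefix_imp_lyap_ordered:
  assumes "w \<in> Sigma_N N" "\<sigma> permutes {1..d}" "\<forall>n\<in>{1..d}. \<forall>i\<in>{1..N}. 0 < lam i n"
    and "ordered_prefix d lam \<sigma> w L0"
  shows "\<exists>p. prob_vector N p \<and> lyap_ordered N d lam \<sigma> p"
proof -
  obtain L where L: "1 \<le> L" "ordered_prefix d lam \<sigma> w L"
    using ordered_prefix_pos_length[OF assms(4)] by blast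
  then have "lyap_ordered N d lam \<sigma> (\<lambda>i. real (letter_count w L i) / real L)"
    using ordered_prefix_iff_lyap_ordered_letter_count[OF assms(1-3)] lyap_ordered_divide by simp
  then show ?thesis using prob_vector_letter_frequency[OF assms(1) L(1)] by blast
qed

lemma lyap_ordered_imp_ordered_prefix:
  assumes "\<sigma> permutes {1..d}" "\<forall>n\<in>{1..d}. \<forall>i\<in>{1..N}. 0 < lam i n"
    and p: "prob_vector N p" "lyap_ordered N d lam \<sigma> p"
  shows "\<exists>w\<in>Sigma_N N. \<exists>L. ordered_prefix d lam \<sigma> w L"
proof -
  have "\<forall>i\<in>{1..N}. 0 \<le> p i" using p(1) by (simp add: prob_vector_def)
  then obtain a :: "nat \<Rightarrow> nat" where a: "lyap_ordered N d lam \<sigma> (\<lambda>i. real (a i))"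
    using lyap_ordered_nat_weights p(2) by blast
  have "1 \<le> N" using p(1) by (cases N) (auto simp: prob_vector_def)
  then obtain w L where w: "w \<in> Sigma_N N" and counts: "\<forall>i\<in>{1..N}. letter_count w L i = a i"
    using exists_word_letter_count by blast
  have "lyap_ordered N d lam \<sigma> (\<lambda>i. real (letter_count w L i))"
    using a lyap_ordered_cong[of N "\<lambda>i. real (letter_count w L i)" "\<lambda>i. real (a i)"] counts by simp
  then show ?thesis
    using ordered_prefix_iff_lyap_ordered_letter_count[OF w assms(1,2)] w by blast
qed

theorem lemma3p1:
  fixes N d :: nat and lam t :: "nat \<Rightarrow> nat \<Rightarrow> real" and \<sigma> :: "nat \<Rightarrow> nat"
  assumes "diag_system N d lam t"
    and "\<sigma> permutes {1..d}"
  shows "\<sigma> \<in> Bset N d lam \<longleftrightarrow>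
    (\<exists>p. prob_vector N p \<and> (\<forall>k\<in>{1..<d}. lyap N lam (\<sigma> k) p < lyap N lam (\<sigma> (k+1)) p))"
proof -
  have lam: "\<forall>n\<in>{1..d}. \<forall>i\<in>{1..N}. 0 < lam i n \<and> lam i n < 1"
    using assms(1) by (simp add: diag_system_def)
  then have lam_pos: "\<forall>n\<in>{1..d}. \<forall>i\<in>{1..N}. 0 < lam i n" by blast
  have "\<sigma> \<in> Bset N d lam \<longleftrightarrow> (\<exists>w\<in>Sigma_N N. \<exists>L. ordered_prefix d lam \<sigma> w L)"
    by (rule Bset_iff_ordered_prefix[OF lam assms(2)])
  also have "\<dots> \<longleftrightarrow> (\<exists>p. prob_vector N p \<and> lyap_ordered N d lam \<sigma> p)"
    using ordered_prefix_imp_lyap_ordered[OF _ assms(2) lam_pos]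
      lyap_ordered_imp_ordered_prefix[OF assms(2) lam_pos] by blast
  finally show ?thesis by (simp add: lyap_ordered_def)
qed

end
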